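(* Let $\boldsymbol{\psi}=(\psi_k)_{k\in\mathbb{K}}$ be a regularization of $\psi:\mathcal{M}\to\Theta$ which is continuous at the data-generating distribution $P\in\mathcal{M}$ with respect to a distance $d$, with family of moduli of continuity $(\delta_k)_{k\in\mathbb{K}}$, and suppose there exists a real-valued positive diverging sequence $(r_n)_{n\in\mathbb{N}}$ such that $d(P_n,P)=o_P(r_n^{-1})$. Let $\bar B$, $\bar\delta$, $\mathcal{G}_n$ and $\tilde k_n$ be as in the context. Then $$\|\psi_{\tilde k_n}(P_n)-\psi(P)\|_\Theta=O_P\left(\inf_{k\in\mathcal{G}_n}\{\bar\delta_k(r_n^{-1})+\bar B_k(P)\}\right).$$
   Context: Setting: $\mathbb{Z}\subseteq\mathbb{R}^d$; data $Z_1,Z_2,\dots$ IID with law $P$; $\mathbf{P}$ the product probability on $\mathbb{Z}^\infty$ (to which $o_P,O_P$ refer); $ca(\mathbb{Z})$ the signed Borel measures of finite variation; $\mathcal{D}$ the discretely supported probability measures; $P_n=n^{-1}\sum_{i\le n}\delta_{Z_i}$. $\mathcal{M}$ is a set of Borel probability measures on $\mathbb{Z}$, $(\Theta,\|\cdot\|_\Theta)$ a normed space, $\mathbb{K}\subseteq\mathbb{R}_+$ unbounded above. A regularization is a family $(\psi_k)_{k\in\mathbb{K}}$, $\psi_k:\mathbb{D}_\psi\subseteq ca(\mathbb{Z})\to\Theta$, $\mathbb{D}_\psi\supseteq\mathcal{M}\cup\mathcal{D}$, with $\|\psi_k(Q)-\psi(Q)\|_\Theta\to0$ as $k\to\infty$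 for all $Q\in\mathcal{M}$. A modulus of continuity is a continuous non-decreasing $f:\mathbb{R}_+\to\mathbb{R}_+$ with $f(t)=0$ iff $t=0$; continuity at $P$ w.r.t. $d$ means moduli $(\delta_k)$ with $\|\psi_k(P')-\psi_k(P)\|_\Theta\le\delta_k(d(P',P))$ for all $k$ and $P'\in\mathbb{D}_\psi$. Objects: $k\mapsto\bar B_k(P)$ is a non-increasing function $\mathbb{R}_+\to\mathbb{R}_+$ with $\bar B_k(P)\ge\|\psi_k(P)-\psi(P)\|_\Theta$ for all $k\ge0$ and $\lim_{k\to\infty}\bar B_k(P)=0$; for each $n$, $k\mapsto\bar\delta_k(r_n^{-1})$ is a non-decreasing function $\mathbb{R}_+\to\mathbb{R}_+$ with $\bar\delta_k(r_n^{-1})\ge\delta_k(r_n^{-1})$. For each $n$, $\mathcal{G}_n$ is a (user-specified) finite subset of $\mathbb{K}$. Define $$\mathcal{L}_n=\{k\in\mathcal{G}_n:\ \|\psi_k(P_n)-\psi_{k'}(P_n)\|_\Theta\le4\bar\delta_{k'}(r_n^{-1})\ \text{for all }k'\ge k,\ k'\in\mathcal{G}_n\},$$ and $\tilde k_n=\min\{k:k\in\mathcal{L}_n\}$. *)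

theory Defs
  imports "HOL-Probability.Probability"
begin

definition Zsets :: "'a::euclidean_space set \<Rightarrow> 'a set set" where
  "Zsets Zs = sets (restrict_space borel Zs)"

text \<open>ca(Z): real-valued (hence finite-variation) countably additive signed Borel
  measures on Z, represented canonically as set functions vanishing off the Borel sets.\<close>
definition ca :: "'a::euclidean_space set \<Rightarrow> ('a set \<Rightarrow> real) set" where
  "ca Zs = {\<mu>. \<mu> {} = 0 \<and> (\<forall>A. A \<notin> Zsets Zs \<longrightarrow> \<mu> A = 0) \<and>
     (\<forall>F::nat \<Rightarrow> 'a set. range F \<subseteq> Zsets Zs \<longrightarrow> disjoint_family F \<longrightarrow>
        (\<lambda>i. \<mu> (F i)) sums \<mu> (\<Union>i. F i))}"

definition probs :: "'a::euclidean_space set \<Rightarrow> ('a set \<Rightarrow> real) set" where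
  "probs Zs = {\<mu> \<in> ca Zs. (\<forall>A. 0 \<le> \<mu> A) \<and> \<mu> Zs = 1}"

definition disc :: "'a::euclidean_space set \<Rightarrow> ('a set \<Rightarrow> real) set" where
  "disc Zs = {\<mu> \<in> probs Zs. \<exists>S. countable S \<and> S \<subseteq> Zs \<and> \<mu> S = 1}"

definition emp :: "'a::euclidean_space set \<Rightarrow> nat \<Rightarrow> (nat \<Rightarrow> 'a) \<Rightarrow> 'a set \<Rightarrow> real" where
  "emp Zs n x A = (if A \<in> Zsets Zs then (\<Sum>i<n. indicator A (x i)) / real n else 0)"

definition modulus :: "(real \<Rightarrow> real) \<Rightarrow> bool" where
  "modulus f \<longleftrightarrow> continuous_on {0..} f \<and> (\<forall>s t. 0 \<le> s \<longrightarrow> s \<le> t \<longrightarrow> f s \<le> f t) \<and>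
     (\<forall>t\<ge>0. 0 \<le> f t) \<and> (\<forall>t\<ge>0. f t = 0 \<longleftrightarrow> t = 0)"

text \<open>Outer probability (o_P / O_P are stated with it to avoid measurability issues).\<close>
definition outer_prob :: "'a measure \<Rightarrow> 'a set \<Rightarrow> real" where
  "outer_prob M A = Inf {measure M B | B. B \<in> sets M \<and> A \<subseteq> B}"

text \<open>The Lepski-type set L_n (with dbar k standing for the bound at r_n^{-1}) and its minimum.\<close>
definition lepski_set :: "(real \<Rightarrow> 'm \<Rightarrow> 'b::real_normed_vector) \<Rightarrow> (real \<Rightarrow> real) \<Rightarrow> real set \<Rightarrow> 'm \<Rightarrow> real set" where
  "lepski_set psik dbar G Q =
     {k \<in> G. \<forall>k'\<in>G. k \<le> k' \<longrightarrow> norm (psik k Q - psik k' Q) \<le> 4 * dbar k'}"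

definition ktilde :: "(real \<Rightarrow> 'm \<Rightarrow> 'b::real_normed_vector) \<Rightarrow> (real \<Rightarrow> real) \<Rightarrow> real set \<Rightarrow> 'm \<Rightarrow> real" where
  "ktilde psik dbar G Q = Min (lepski_set psik dbar G Q)"

end

theory Submission
  imports Defs
begin

text \<open>On the event \<open>r\<^sub>n d(P\<^sub>n, P) \<le> 1\<close>, whose probability tends to one, continuity and the
  bias bound give \<open>\<parallel>\<psi>\<^sub>k(P\<^sub>n) - \<psi>(P)\<parallel> \<le> \<delta>\<^sub>k + B\<^sub>k\<close> for every grid point \<open>k\<close>, and the rest
  is deterministic. Fix any grid point \<open>k\<close> and let \<open>k\<^sup>~\<close> be Lepski's choice. If \<open>k\<^sup>~ \<le> k\<close>,
  the definition of the Lepski set bounds \<open>\<parallel>\<psi>\<^sub>k\<^sub>~ - \<psi>\<^sub>k\<parallel>\<close> by \<open>4\<delta>\<^sub>k\<close>. Otherwise the largest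
  grid point \<open>j < k\<^sup>~\<close> is rejected by some \<open>k' \<ge> k\<^sup>~\<close>, and
  \<open>4\<delta>\<^sub>k\<^sub>' < \<parallel>\<psi>\<^sub>j - \<psi>\<^sub>k\<^sub>'\<parallel> \<le> 2\<delta>\<^sub>k\<^sub>' + 2B\<^sub>k\<close> (monotonicity of \<open>\<delta>\<close> and \<open>B\<close>) forces
  \<open>\<delta>\<^sub>k\<^sub>' \<le> B\<^sub>k\<close>, whence the error at \<open>k\<^sup>~\<close> is at most \<open>\<delta>\<^sub>k\<^sub>' + B\<^sub>k \<le> 2B\<^sub>k\<close>. Either way it is at
  most \<open>5(\<delta>\<^sub>k + B\<^sub>k)\<close>, so \<open>C = 5\<close> works in the \<open>O\<^sub>P\<close> statement.\<close>

lemma lepski_set_subset: "lepski_set psik dbar G Q \<subseteq> G"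
  unfolding lepski_set_def by blast

lemma Max_in_lepski_set:
  assumes "finite G" "G \<noteq> {}" "\<forall>k\<in>G. 0 \<le> dbar k"
  shows "Max G \<in> lepski_set psik dbar G Q"
proof -
  have "k' = Max G" if "k' \<in> G" "Max G \<le> k'" for k'
    using that assms by (meson Max_ge antisym)
  then show ?thesis
    using assms Max_in[OF assms(1,2)] unfolding lepski_set_def by auto
qed

lemma
  assumes "finite G" "G \<noteq> {}" "\<forall>k\<in>G. 0 \<le> dbar k"
  shows ktilde_in_lepski_set: "ktilde psik dbar G Q \<in> lepski_set psik dbar G Q"
    and ktilde_le: "k \<in> lepski_set psik dbar G Q \<Longrightarrow> ktilde psik dbar G Q \<le> k"
proof -
  have "finite (lepski_set psik dbar G Q)"
    using assms(1) unfolding lepski_set_def by simp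
  moreover have "lepski_set psik dbar G Q \<noteq> {}"
    using Max_in_lepski_set[OF assms, where psik = psik and Q = Q] by blast
  ultimately show "ktilde psik dbar G Q \<in> lepski_set psik dbar G Q"
    and "k \<in> lepski_set psik dbar G Q \<Longrightarrow> ktilde psik dbar G Q \<le> k"
    unfolding ktilde_def by simp_all
qed

lemma ktilde_in_grid:
  assumes "finite G" "G \<noteq> {}" "\<forall>k\<in>G. 0 \<le> dbar k"
  shows "ktilde psik dbar G Q \<in> G"
  by (rule subsetD[OF lepski_set_subset ktilde_in_lepski_set[OF assms]])

lemma lepski_rejection_above_ktilde:
  fixes psik :: "real \<Rightarrow> 'm \<Rightarrow> 'b::real_normed_vector"
  assumes fin: "finite G" and dbar_nonneg: "\<forall>k\<in>G. 0 \<le> dbar k"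
    and k: "k \<in> G" "k < ktilde psik dbar G Q"
  obtains j k' where "j \<in> G" "k' \<in> G" "k \<le> j" "j \<le> k'" "ktilde psik dbar G Q \<le> k'"
    "4 * dbar k' < norm (psik j Q - psik k' Q)"
proof -
  define kt where "kt = ktilde psik dbar G Q"
  have ne: "G \<noteq> {}" using k(1) by auto
  define J where "J = {i\<in>G. i < kt}"
  have J: "finite J" "J \<noteq> {}" using fin k unfolding J_def kt_def by auto
  define j where "j = Max J"
  have j_max: "i \<le> j" if "i \<in> G" "i < kt" for i
    using Max_ge[OF J(1)] that unfolding j_def J_def by simp
  have "j \<in> J" using Max_in[OF J] unfolding j_def .
  then have j: "j \<in> G" "j < kt" "k \<le> j"
    using j_max k unfolding J_def kt_def by auto
  have "j \<notin> lepski_set psik dbar G Q"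
  proof
    assume "j \<in> lepski_set psik dbar G Q"
    then have "kt \<le> j" unfolding kt_def by (rule ktilde_le[OF fin ne dbar_nonneg])
    with j(2) show False by simp
  qed
  then obtain k' where k': "k' \<in> G" "j \<le> k'" "4 * dbar k' < norm (psik j Q - psik k' Q)"
    using j(1) unfolding lepski_set_def by (auto simp: not_le)
  have "k' \<noteq> j" using k'(1,3) dbar_nonneg by auto
  then have "kt \<le> k'" using j_max[OF k'(1)] k'(2) by linarith
  then show ?thesis using that[OF j(1) k'(1) j(3) k'(2)] k'(3) unfolding kt_def by simp
qed

lemma norm_ktilde_le_oracle:
  fixes psik :: "real \<Rightarrow> 'm \<Rightarrow> 'b::real_normed_vector" and dbar Bbar :: "real \<Rightarrow> real"
  assumes fin: "finite G"
    and dbar_nonneg: "\<forall>k\<in>G. 0 \<le> dbar k" and dbar_mono: "mono_on G dbar"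
    and Bbar_nonneg: "\<forall>k\<in>G. 0 \<le> Bbar k" and Bbar_antimono: "antimono_on G Bbar"
    and err: "\<forall>k\<in>G. norm (psik k Q - t) \<le> dbar k + Bbar k"
    and k: "k \<in> G"
  shows "norm (psik (ktilde psik dbar G Q) Q - t) \<le> 5 * (dbar k + Bbar k)"
proof -
  define kt where "kt = ktilde psik dbar G Q"
  have ne: "G \<noteq> {}" using k by blast
  have kt: "kt \<in> G" "kt \<in> lepski_set psik dbar G Q"
    unfolding kt_def
    by (rule ktilde_in_grid[OF fin ne dbar_nonneg], rule ktilde_in_lepski_set[OF fin ne dbar_nonneg])
  have triangle: "norm (psik a Q - t) \<le> norm (psik a Q - psik b Q) + norm (psik b Q - t)" for a b
    using norm_triangle_ineq[of "psik a Q - psik b Q" "psik b Q - t"] by simp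
  have err_kt: "norm (psik kt Q - t) \<le> dbar kt + Bbar kt"
    using err kt(1) by blast
  have err_k: "norm (psik k Q - t) \<le> dbar k + Bbar k" and nonneg_k: "0 \<le> Bbar k"
    using err Bbar_nonneg k by blast+
  show ?thesis
  proof (cases "kt \<le> k")
    case True
    then have "norm (psik kt Q - psik k Q) \<le> 4 * dbar k"
      using kt(2) k unfolding lepski_set_def by blast
    then show ?thesis
      using triangle[of kt k] err_k nonneg_k unfolding kt_def distrib_left by linarith
  next
    case False
    then have "k < ktilde psik dbar G Q" unfolding kt_def by simp
    then obtain j k' where jk': "j \<in> G" "k' \<in> G" "k \<le> j" "j \<le> k'" "ktilde psik dbar G Q \<le> k'"
      and rejected: "4 * dbar k' < norm (psik j Q - psik k' Q)"
      by (rule lepski_rejection_above_ktilde[OF fin dbar_nonneg k])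
    have "norm (psik j Q - psik k' Q) \<le> norm (psik j Q - t) + norm (psik k' Q - t)"
      using norm_triangle_ineq4[of "psik j Q - t" "psik k' Q - t"] by simp
    moreover have "norm (psik j Q - t) \<le> dbar j + Bbar j" "norm (psik k' Q - t) \<le> dbar k' + Bbar k'"
      using err jk'(1,2) by blast+
    moreover have "dbar j \<le> dbar k'"
      using monotone_onD[OF dbar_mono jk'(1,2,4)] .
    moreover have "Bbar j \<le> Bbar k" "Bbar k' \<le> Bbar k"
      using monotone_onD[OF Bbar_antimono k jk'(1,3)] jk'(3,4)
        monotone_onD[OF Bbar_antimono k jk'(2)] by simp_all
    ultimately have "dbar k' \<le> Bbar k"
      using rejected by linarith
    moreover have "dbar kt \<le> dbar k'"
      using monotone_onD[OF dbar_mono kt(1) jk'(2,5)[folded kt_def]] .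
    moreover have "Bbar kt \<le> Bbar k"
      using monotone_onD[OF Bbar_antimono k kt(1)] False by simp
    moreover have "0 \<le> dbar k"
      using dbar_nonneg k by blast
    ultimately show ?thesis
      using err_kt nonneg_k unfolding kt_def distrib_left by linarith
  qed
qed

corollary norm_ktilde_le_Min_oracle:
  fixes psik :: "real \<Rightarrow> 'm \<Rightarrow> 'b::real_normed_vector" and dbar Bbar :: "real \<Rightarrow> real"
  assumes "finite G" "G \<noteq> {}"
    and "\<forall>k\<in>G. 0 \<le> dbar k" "mono_on G dbar"
    and "\<forall>k\<in>G. 0 \<le> Bbar k" "antimono_on G Bbar"
    and "\<forall>k\<in>G. norm (psik k Q - t) \<le> dbar k + Bbar k"
  shows "norm (psik (ktilde psik dbar G Q) Q - t) \<le> 5 * Min ((\<lambda>k. dbar k + Bbar k) ` G)"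
proof -
  have "Min ((\<lambda>k. dbar k + Bbar k) ` G) \<in> (\<lambda>k. dbar k + Bbar k) ` G"
    using assms(1,2) by (intro Min_in) auto
  then obtain k where "k \<in> G" "Min ((\<lambda>k. dbar k + Bbar k) ` G) = dbar k + Bbar k"
    by (rule imageE)
  then show ?thesis using norm_ktilde_le_oracle[where psik = psik and Q = Q and t = t, OF assms(1,3-7)] by simp
qed

lemma norm_psik_le_modulus_plus_bias:
  fixes psik :: "real \<Rightarrow> 'm \<Rightarrow> 'b::real_normed_vector"
  assumes "modulus (\<delta> k)"
    and "norm (psik k Q - psik k P) \<le> \<delta> k (d Q P)"
    and "0 \<le> d Q P" "d Q P \<le> s"
    and "norm (psik k P - t) \<le> B"
  shows "norm (psik k Q - t) \<le> \<delta> k s + B"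
proof -
  have "\<delta> k (d Q P) \<le> \<delta> k s"
    using assms(1,3,4) unfolding modulus_def by blast
  then show ?thesis
    using assms(2,5) norm_triangle_ineq[of "psik k Q - psik k P" "psik k P - t"] by simp
qed

lemma norm_ktilde_le_Min_oracle_if_close:
  fixes psik :: "real \<Rightarrow> 'm \<Rightarrow> 'b::real_normed_vector" and dbar Bbar :: "real \<Rightarrow> real"
  assumes "finite G" "G \<noteq> {}"
    and "\<forall>k\<in>G. 0 \<le> dbar k" "mono_on G dbar"
    and "\<forall>k\<in>G. 0 \<le> Bbar k" "antimono_on G Bbar"
    and moduli: "\<forall>k\<in>G. modulus (\<delta> k)"
    and continuity: "\<forall>k\<in>G. norm (psik k Q - psik k P) \<le> \<delta> k (d Q P)"
    and close: "0 \<le> d Q P" "d Q P \<le> s"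
    and dbar_bound: "\<forall>k\<in>G. \<delta> k s \<le> dbar k"
    and Bbar_bound: "\<forall>k\<in>G. norm (psik k P - t) \<le> Bbar k"
  shows "norm (psik (ktilde psik dbar G Q) Q - t) \<le> 5 * Min ((\<lambda>k. dbar k + Bbar k) ` G)"
proof -
  have "norm (psik k Q - t) \<le> dbar k + Bbar k" if "k \<in> G" for k
  proof -
    have "norm (psik k Q - t) \<le> \<delta> k s + Bbar k"
      using that moduli continuity close Bbar_bound by (intro norm_psik_le_modulus_plus_bias) auto
    also have "\<dots> \<le> dbar k + Bbar k"
      using that dbar_bound by simp
    finally show ?thesis .
  qed
  then show ?thesis
    by (intro norm_ktilde_le_Min_oracle[OF assms(1-6)] ballI)
qed

lemma outer_prob_mono:
  assumes "A \<subseteq> A'" "A' \<subseteq> space M"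
  shows "outer_prob M A \<le> outer_prob M A'"
  unfolding outer_prob_def
proof (rule cInf_superset_mono)
  show "{measure M B |B. B \<in> sets M \<and> A' \<subseteq> B} \<noteq> {}"
    using assms by blast
  show "bdd_below {measure M B |B. B \<in> sets M \<and> A \<subseteq> B}"
    by (rule bdd_belowI[of _ 0]) auto
qed (use assms in blast)

lemma eventually_outer_prob_le_of_subset:
  assumes "(\<lambda>n. outer_prob M (B n)) \<longlonglongrightarrow> 0" "0 < \<epsilon>"
    and "\<And>n. n \<ge> n\<^sub>0 \<Longrightarrow> A n \<subseteq> B n" "\<And>n. B n \<subseteq> space M"
  shows "\<exists>N. \<forall>n\<ge>N. outer_prob M (A n) \<le> \<epsilon>"
proof -
  obtain N where N: "\<And>n. n \<ge> N \<Longrightarrow> outer_prob M (B n) < \<epsilon>"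
    using order_tendstoD(2)[OF assms(1,2)] unfolding eventually_sequentially by blast
  have "outer_prob M (A n) \<le> \<epsilon>" if "n \<ge> max N n\<^sub>0" for n
  proof -
    have "outer_prob M (A n) \<le> outer_prob M (B n)"
      using that by (intro outer_prob_mono assms(3,4)) simp
    also have "\<dots> < \<epsilon>"
      using that by (intro N) simp
    finally show ?thesis by simp
  qed
  then show ?thesis by blast
qed

lemma Zs_in_Zsets: "Zs \<in> Zsets Zs"
  unfolding Zsets_def using sets.top[of "restrict_space borel Zs"] by (simp add: space_restrict_space)

lemma finite_in_Zsets:
  assumes "finite S" "S \<subseteq> Zs"
  shows "S \<in> Zsets Zs"
proof -
  have "Zs \<inter> S \<in> sets (restrict_space borel Zs)"
    using assms(1) by (auto simp: sets_restrict_space finite_imp_closed)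
  then show ?thesis
    using assms(2) unfolding Zsets_def by (simp add: Int_absorb1)
qed

lemma emp_in_ca: "emp Zs n x \<in> ca Zs"
  unfolding ca_def
proof (intro CollectI conjI allI impI)
  fix F :: "nat \<Rightarrow> 'a set" assume F: "range F \<subseteq> Zsets Zs" and disj: "disjoint_family F"
  have "(\<Union>i. F i) \<in> Zsets Zs"
    using F unfolding Zsets_def by (intro sets.countable_UN'') auto
  moreover have "(\<lambda>i. (\<Sum>j<n. indicator (F i) (x j)) / real n)
      sums ((\<Sum>j<n. indicator (\<Union>i. F i) (x j)) / real n)"
    using disj by (intro sums_divide sums_sum indicator_sums) (auto simp: disjoint_family_on_def)
  moreover have "F i \<in> Zsets Zs" for i
    using F by blast
  ultimately show "(\<lambda>i. emp Zs n x (F i)) sums emp Zs n x (\<Union>i. F i)"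
    unfolding emp_def by simp
qed (simp_all add: emp_def)

lemma sample_in_Zs:
  assumes "sets P = Zsets Zs" "\<omega> \<in> space (PiM I (\<lambda>_. P))" "i \<in> I"
  shows "\<omega> i \<in> Zs"
proof -
  have "space P = Zs"
    using sets_eq_imp_space_eq[OF assms(1)[unfolded Zsets_def]] by (simp add: space_restrict_space)
  then show ?thesis
    using assms(2,3) by (auto simp: space_PiM)
qed

lemma emp_in_disc:
  assumes "n \<noteq> 0" and "\<forall>i. x i \<in> Zs"
  shows "emp Zs n x \<in> disc Zs"
proof -
  have "x ` {..<n} \<subseteq> Zs" using assms(2) by auto
  then have support: "x ` {..<n} \<in> Zsets Zs"
    by (simp add: finite_in_Zsets)
  have "emp Zs n x Zs = 1"
    using Zs_in_Zsets assms by (simp add: emp_def)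
  moreover have "0 \<le> emp Zs n x A" for A
    by (simp add: emp_def sum_nonneg)
  ultimately have "emp Zs n x \<in> probs Zs"
    unfolding probs_def using emp_in_ca by blast
  moreover have "emp Zs n x (x ` {..<n}) = 1"
    using support assms(1) by (simp add: emp_def)
  moreover have "countable (x ` {..<n})"
    by (simp add: countable_finite)
  ultimately show ?thesis
    unfolding disc_def using \<open>x ` {..<n} \<subseteq> Zs\<close> by blast
qed

theorem theorem2:
  fixes Zs :: "'a::euclidean_space set"
    and P :: "'a measure"
    and Mset :: "('a set \<Rightarrow> real) set"
    and Dpsi :: "('a set \<Rightarrow> real) set"
    and Kset :: "real set"
    and psi :: "('a set \<Rightarrow> real) \<Rightarrow> 'b::real_normed_vector"
    and psik :: "real \<Rightarrow> ('a set \<Rightarrow> real) \<Rightarrow> 'b"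
    and d :: "('a set \<Rightarrow> real) \<Rightarrow> ('a set \<Rightarrow> real) \<Rightarrow> real"
    and \<delta> :: "real \<Rightarrow> real \<Rightarrow> real"
    and r :: "nat \<Rightarrow> real"
    and Bbar :: "real \<Rightarrow> real"
    and dbar :: "nat \<Rightarrow> real \<Rightarrow> real"
    and G :: "nat \<Rightarrow> real set"
  defines "Pinf \<equiv> PiM (UNIV :: nat set) (\<lambda>_. P)"
  assumes P_prob: "prob_space P"
    and P_sets: "sets P = Zsets Zs"
    and Mset_sub: "Mset \<subseteq> probs Zs"
    and P_in_M: "measure P \<in> Mset"
    and K_nonneg: "Kset \<subseteq> {0..}"
    and K_unbdd: "\<forall>x. \<exists>k\<in>Kset. x < k"
    and Dpsi_sub: "Dpsi \<subseteq> ca Zs"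
    and Dpsi_sup: "Mset \<union> disc Zs \<subseteq> Dpsi"
    and regularization: "\<forall>Q\<in>Mset. filterlim (\<lambda>k. norm (psik k Q - psi Q)) (nhds 0) (inf at_top (principal Kset))"
    and d_nonneg: "\<forall>Q\<in>Dpsi. \<forall>Q'\<in>Dpsi. 0 \<le> d Q Q'"
    and d_refl: "\<forall>Q\<in>Dpsi. d Q Q = 0"
    and d_sym: "\<forall>Q\<in>Dpsi. \<forall>Q'\<in>Dpsi. d Q Q' = d Q' Q"
    and d_triangle: "\<forall>Q\<in>Dpsi. \<forall>Q'\<in>Dpsi. \<forall>Q''\<in>Dpsi. d Q Q'' \<le> d Q Q' + d Q' Q''"
    and moduli: "\<forall>k\<in>Kset. modulus (\<delta> k)"
    and continuity: "\<forall>k\<in>Kset. \<forall>P'\<in>Dpsi. norm (psik k P' - psik k (measure P)) \<le> \<delta> k (d P' (measure P))"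
    and r_pos: "\<forall>n. 0 < r n"
    and r_div: "filterlim r at_top sequentially"
    and rate: "\<forall>\<epsilon>>0. (\<lambda>n. outer_prob Pinf {\<omega> \<in> space Pinf. r n * d (emp Zs n \<omega>) (measure P) > \<epsilon>}) \<longlonglongrightarrow> 0"
    and Bbar_nonneg: "\<forall>k\<ge>0. 0 \<le> Bbar k"
    and Bbar_antimono: "\<forall>k k'. 0 \<le> k \<longrightarrow> k \<le> k' \<longrightarrow> Bbar k' \<le> Bbar k"
    and Bbar_bound: "\<forall>k\<in>Kset. norm (psik k (measure P) - psi (measure P)) \<le> Bbar k"
    and Bbar_lim: "(Bbar \<longlongrightarrow> 0) at_top"
    and dbar_nonneg: "\<forall>n. \<forall>k\<ge>0. 0 \<le> dbar n k"
    and dbar_mono: "\<forall>n. \<forall>k k'. 0 \<le> k \<longrightarrow> k \<le> k' \<longrightarrow> dbar n k \<le> dbar n k'"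
    and dbar_bound: "\<forall>n. \<forall>k\<in>Kset. \<delta> k (1 / r n) \<le> dbar n k"
    and G_fin: "\<forall>n. finite (G n)"
    and G_ne: "\<forall>n. G n \<noteq> {}"
    and G_sub: "\<forall>n. G n \<subseteq> Kset"
  shows "\<forall>\<epsilon>>0. \<exists>C. \<exists>N. \<forall>n\<ge>N.
    outer_prob Pinf {\<omega> \<in> space Pinf.
      norm (psik (ktilde psik (dbar n) (G n) (emp Zs n \<omega>)) (emp Zs n \<omega>) - psi (measure P))
        > C * Min ((\<lambda>k. dbar n k + Bbar k) ` G n)} \<le> \<epsilon>"
proof (intro allI impI)
  fix \<epsilon> :: real assume "\<epsilon> > 0"
  let ?err = "\<lambda>n \<omega>. norm (psik (ktilde psik (dbar n) (G n) (emp Zs n \<omega>)) (emp Zs n \<omega>) - psi (measure P))"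
  let ?best = "\<lambda>n. Min ((\<lambda>k. dbar n k + Bbar k) ` G n)"
  let ?far = "\<lambda>n. {\<omega> \<in> space Pinf. r n * d (emp Zs n \<omega>) (measure P) > 1}"
  have G_Kset: "k \<in> Kset" if "k \<in> G n" for k n
    using G_sub that by blast
  have G_nonneg: "\<forall>k\<in>G n. 0 \<le> k" for n
    using G_Kset K_nonneg by fastforce
  have lepski_bound: "?err n \<omega> \<le> 5 * ?best n"
    if "n \<noteq> 0" "\<omega> \<in> space Pinf" "\<omega> \<notin> ?far n" for n \<omega>
  proof (rule norm_ktilde_le_Min_oracle_if_close[where \<delta> = \<delta> and d = d and P = "measure P" and s = "1 / r n"])
    have Q: "emp Zs n \<omega> \<in> Dpsi"
      using emp_in_disc[OF that(1)] sample_in_Zs[OF P_sets that(2)[unfolded Pinf_def]] Dpsi_sup by blast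
    have "measure P \<in> Dpsi"
      using P_in_M Dpsi_sup by blast
    with Q show "0 \<le> d (emp Zs n \<omega>) (measure P)"
      using d_nonneg by blast
    show "\<forall>k\<in>G n. norm (psik k (emp Zs n \<omega>) - psik k (measure P)) \<le> \<delta> k (d (emp Zs n \<omega>) (measure P))"
      using Q continuity G_Kset by blast
    show "d (emp Zs n \<omega>) (measure P) \<le> 1 / r n"
      using that(2,3) r_pos by (simp add: field_simps mult.commute)
    show "mono_on (G n) (dbar n)"
      using G_nonneg dbar_mono by (intro monotone_onI) simp
    show "antimono_on (G n) Bbar"
      using G_nonneg Bbar_antimono by (intro monotone_onI) simp
    show "finite (G n)" "G n \<noteq> {}"
      using G_fin G_ne by simp_all
    show "\<forall>k\<in>G n. 0 \<le> dbar n k" "\<forall>k\<in>G n. 0 \<le> Bbar k"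
      using G_nonneg dbar_nonneg Bbar_nonneg by simp_all
    show "\<forall>k\<in>G n. modulus (\<delta> k)" "\<forall>k\<in>G n. \<delta> k (1 / r n) \<le> dbar n k"
      "\<forall>k\<in>G n. norm (psik k (measure P) - psi (measure P)) \<le> Bbar k"
      using G_Kset moduli dbar_bound Bbar_bound by simp_all
  qed
  have "{\<omega> \<in> space Pinf. ?err n \<omega> > 5 * ?best n} \<subseteq> ?far n" if "n \<ge> 1" for n
  proof
    fix \<omega> assume "\<omega> \<in> {\<omega> \<in> space Pinf. ?err n \<omega> > 5 * ?best n}"
    then show "\<omega> \<in> ?far n"
      using lepski_bound[of n \<omega>] that by (auto simp: not_le)
  qed
  then have "\<exists>N. \<forall>n\<ge>N. outer_prob Pinf {\<omega> \<in> space Pinf. ?err n \<omega> > 5 * ?best n} \<le> \<epsilon>"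
    using rate \<open>\<epsilon> > 0\<close> by (intro eventually_outer_prob_le_of_subset[where n\<^sub>0 = 1 and B = ?far]) auto
  then show "\<exists>C N. \<forall>n\<ge>N. outer_prob Pinf {\<omega> \<in> space Pinf. ?err n \<omega> > C * ?best n} \<le> \<epsilon>"
    by (rule exI)
qed

end
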